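(* Let $t\ge1$, $t\le k\le v$, $\lambda\ge1$ be integers and suppose there exists a $t$-$(v,k,\lambda)$ design whose number of blocks $b=\lambda\binom{v}{t}/\binom{k}{t}$ is divisible by $v$. Then there exists an authentication system with $k$ source states, $v$ messages and $b$ encoding rules which, when the source states are equiprobable and the encoding rules are used with equal probability, has perfect secrecy and is $(t-1)$-fold secure against spoofing in the verification oracle model. Moreover, the system is optimal (i.e. $b=\binom{v}{t}/\binom{k}{t}$) if and only if $\lambda=1$.
   Context: A $t$-$(v,k,\lambda)$ design is a pair $(X,\mathcal{B})$ where $X$ is a set of $v$ points and $\mathcal{B}$ is a collection of distinct $k$-subsets of $X$ (blocks) such that every $t$-subset of $X$ is contained in exactly $\lambda$ blocks; $b=|\mathcal{B}|$. Authentication system: finite sets $\mathcal{S}$ of $k$ source states, $\mathcal{M}$ of $v$ messages, $\mathcal{E}$ of $b$ encoding rules, each $e\in\mathcal{E}$ an injective map $\mathcal{S}\to\mathcal{M}$; $M(e)=\{e(s):s\in\mathcal{S}\}$ is the set of messages valid (accepted) under $e$. A key $e$ is drawn according to $p_E$, source states according to $p_S$, independently; "equiprobable source states" means independent and uniformly distributed source states. Perfect secrecy: $p_S(s\mid m)=p_S(s)$ for every source state $s$ and message $m$. Verification oracle (V-oracle) model: for a secret key $e$, the opponent may adaptively submit query messages $m$ to an oracle which answers "accept" if $m\in M(e)$ and "reject" otherwise. In an offline spoofing attack of order $i$, the opponent makes $i$ adaptive queries and then outputs a message distinct from all queried ones, succeeding if it lies in $M(e)$; $P^{\mathrm{offline}}_{d_i}$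 denotes the maximal success probability over strategies. In an online attack of order $i$, the opponent succeeds as soon as one of his $i+1$ distinct submitted messages is accepted; $P^{\mathrm{online}}_{d_i}$ is the maximal success probability. One always has $P^{\mathrm{offline}}_{d_i}\ge k/v$ and $P^{\mathrm{online}}_{d_i}\ge 1-\binom{v-k}{i+1}/\binom{v}{i+1}$, and equality in one is equivalent to equality in the other. The system is $t$-fold secure against spoofing in the V-oracle model if $P^{\mathrm{offline}}_{d_t}=k/v$ (equivalently $P^{\mathrm{online}}_{d_t}=1-\binom{v-k}{t+1}/\binom{v}{t+1}$). A $(t-1)$-fold secure system in this model has $b\ge\binom{v}{t}/\binom{k}{t}$; it is optimal if equality holds. *)

theory Defs
  imports Complex_Main
begin

definition is_design :: "nat \<Rightarrow> nat \<Rightarrow> nat \<Rightarrow> nat \<Rightarrow> 'a set \<Rightarrow> 'a set set \<Rightarrow> bool" where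
  "is_design t v k lam X B \<longleftrightarrow>
     finite X \<and> card X = v \<and> (\<forall>Bl\<in>B. Bl \<subseteq> X \<and> card Bl = k) \<and>
     (\<forall>T. T \<subseteq> X \<and> card T = t \<longrightarrow> card {Bl\<in>B. T \<subseteq> Bl} = lam)"

definition auth_system :: "'s set \<Rightarrow> 'm set \<Rightarrow> 'e set \<Rightarrow> ('e \<Rightarrow> 's \<Rightarrow> 'm) \<Rightarrow> bool" where
  "auth_system S M E enc \<longleftrightarrow> finite S \<and> finite M \<and> finite E \<and>
     (\<forall>e\<in>E. inj_on (enc e) S \<and> enc e ` S \<subseteq> M)"

definition valid_msgs :: "'s set \<Rightarrow> ('e \<Rightarrow> 's \<Rightarrow> 'm) \<Rightarrow> 'e \<Rightarrow> 'm set" where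
  "valid_msgs S enc e = enc e ` S"

definition p_SM :: "'s set \<Rightarrow> 'e set \<Rightarrow> ('e \<Rightarrow> 's \<Rightarrow> 'm) \<Rightarrow> ('s \<Rightarrow> real) \<Rightarrow> ('e \<Rightarrow> real) \<Rightarrow> 's \<Rightarrow> 'm \<Rightarrow> real" where
  "p_SM S E enc pS pE s m = (\<Sum>e\<in>{e\<in>E. enc e s = m}. pE e) * pS s"

definition p_M :: "'s set \<Rightarrow> 'e set \<Rightarrow> ('e \<Rightarrow> 's \<Rightarrow> 'm) \<Rightarrow> ('s \<Rightarrow> real) \<Rightarrow> ('e \<Rightarrow> real) \<Rightarrow> 'm \<Rightarrow> real" where
  "p_M S E enc pS pE m = (\<Sum>s\<in>S. p_SM S E enc pS pE s m)"

text \<open>Perfect secrecy p(s|m) = p(s), written multiplicatively p(s,m) = p(s) p(m)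
  (equivalent whenever p(m) > 0, and the conditional is undefined otherwise).\<close>
definition perfect_secrecy :: "'s set \<Rightarrow> 'm set \<Rightarrow> 'e set \<Rightarrow> ('e \<Rightarrow> 's \<Rightarrow> 'm) \<Rightarrow> ('s \<Rightarrow> real) \<Rightarrow> ('e \<Rightarrow> real) \<Rightarrow> bool" where
  "perfect_secrecy S M E enc pS pE \<longleftrightarrow>
     (\<forall>s\<in>S. \<forall>m\<in>M. p_SM S E enc pS pE s m = pS s * p_M S E enc pS pE m)"

text \<open>A (deterministic) strategy q maps the history of
  (query, answer) pairs so far to the next message. vhist q A n is the history after
  n queries when the valid-message set of the secret key is A.\<close>
fun vhist :: "(('m \<times> bool) list \<Rightarrow> 'm) \<Rightarrow> 'm set \<Rightarrow> nat \<Rightarrow> ('m \<times> bool) list" where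
  "vhist q A 0 = []"
| "vhist q A (Suc n) = vhist q A n @ [(q (vhist q A n), q (vhist q A n) \<in> A)]"

definition offline_out :: "(('m \<times> bool) list \<Rightarrow> 'm) \<Rightarrow> 'm set \<Rightarrow> nat \<Rightarrow> 'm" where
  "offline_out q A i = q (vhist q A i)"

definition offline_strategy :: "'s set \<Rightarrow> 'm set \<Rightarrow> 'e set \<Rightarrow> ('e \<Rightarrow> 's \<Rightarrow> 'm) \<Rightarrow> nat \<Rightarrow> (('m \<times> bool) list \<Rightarrow> 'm) \<Rightarrow> bool" where
  "offline_strategy S M E enc i q \<longleftrightarrow> (\<forall>h. q h \<in> M) \<and>
     (\<forall>e\<in>E. offline_out q (valid_msgs S enc e) i \<notin> fst ` set (vhist q (valid_msgs S enc e) i))"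

definition offline_success :: "'s set \<Rightarrow> 'e set \<Rightarrow> ('e \<Rightarrow> 's \<Rightarrow> 'm) \<Rightarrow> ('e \<Rightarrow> real) \<Rightarrow> nat \<Rightarrow> (('m \<times> bool) list \<Rightarrow> 'm) \<Rightarrow> real" where
  "offline_success S E enc pE i q =
     (\<Sum>e\<in>E. if offline_out q (valid_msgs S enc e) i \<in> valid_msgs S enc e then pE e else 0)"

definition P_offline :: "'s set \<Rightarrow> 'm set \<Rightarrow> 'e set \<Rightarrow> ('e \<Rightarrow> 's \<Rightarrow> 'm) \<Rightarrow> ('e \<Rightarrow> real) \<Rightarrow> nat \<Rightarrow> real" where
  "P_offline S M E enc pE i =
     Sup (offline_success S E enc pE i ` {q. offline_strategy S M E enc i q})"

definition V_secure :: "'s set \<Rightarrow> 'm set \<Rightarrow> 'e set \<Rightarrow> ('e \<Rightarrow> 's \<Rightarrow> 'm) \<Rightarrow> ('e \<Rightarrow> real) \<Rightarrow> nat \<Rightarrow> bool" where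
  "V_secure S M E enc pE t \<longleftrightarrow> P_offline S M E enc pE t = real (card S) / real (card M)"

end

theory Submission
  imports Defs
begin

(*
  Label the points of the design 0..v-1 and the blocks 0..b-1.  Since v divides b, say
  b = v*c, every point lies in k*c blocks, and Hall's marriage theorem lets us pick one
  point from each block so that every point is picked exactly c times; iterating k times
  orders each block so that each point occupies each position exactly c times
  (balanced_ordering).  The orderings serve as encoding rules: the source state s is sent
  as the s-th point of the key block.  Balance of positions gives perfect secrecy.

  For security, the keys consistent with a set A of accepted and R of rejected messages
  are counted by design arithmetic alone as long as |A|+|R| <= t (consistent_count_const).
  An induction over the opponent's adaptive queries then shows that every strategy making
  t-1 queries succeeds under exactly k*b/v keys (offline_success_count), i.e. with the
  minimal probability k/v.  Optimality is the identity b * C(k,t) = lam * C(v,t).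
*)

lemma double_counting:
  assumes "finite P" "finite Q"
  shows "(\<Sum>x\<in>P. card {y\<in>Q. R x y}) = (\<Sum>y\<in>Q. card {x\<in>P. R x y})"
proof -
  have "card {y\<in>Q. R x y} = (\<Sum>y\<in>Q. if R x y then 1 else 0)" for x
    using sum.inter_filter[OF assms(2), of "\<lambda>_. 1::nat" "R x"] by simp
  moreover have "card {x\<in>P. R x y} = (\<Sum>x\<in>P. if R x y then 1 else 0)" for y
    using sum.inter_filter[OF assms(1), of "\<lambda>_. 1::nat" "\<lambda>x. R x y"] by simp
  ultimately show ?thesis using sum.swap by simp
qed

definition hall_condition :: "'i set \<Rightarrow> ('i \<Rightarrow> 'b set) \<Rightarrow> bool" where
  "hall_condition J A \<longleftrightarrow> (\<forall>K\<subseteq>J. card K \<le> card (\<Union> (A ` K)))"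

definition has_sdr :: "'i set \<Rightarrow> ('i \<Rightarrow> 'b set) \<Rightarrow> bool" where
  "has_sdr J A \<longleftrightarrow> (\<exists>f. inj_on f J \<and> (\<forall>j\<in>J. f j \<in> A j))"

text \<open>Case of no critical subfamily: after matching one index to any of its elements, Hall's
  condition survives for the remaining indices.\<close>
lemma hall_delete_element:
  assumes fin: "finite J" "\<forall>j\<in>J. finite (A j)"
    and strict: "\<forall>K. K \<subseteq> J \<and> K \<noteq> {} \<and> K \<noteq> J \<longrightarrow> card K < card (\<Union> (A ` K))"
    and j0: "j0 \<in> J"
  shows "hall_condition (J - {j0}) (\<lambda>j. A j - {x})"
  unfolding hall_condition_def
proof (intro allI impI)
  fix K assume K: "K \<subseteq> J - {j0}"
  show "card K \<le> card (\<Union> ((\<lambda>j. A j - {x}) ` K))"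
  proof (cases "K = {}")
    case False
    then have lt: "card K < card (\<Union> (A ` K))" using strict K j0 by blast
    have "finite (\<Union> (A ` K))" using K fin by (meson Diff_subset finite_UN_I finite_subset subsetD)
    then have "card (\<Union> (A ` K)) - 1 \<le> card (\<Union> (A ` K) - {x})"
      by (simp add: card_Diff_singleton_if)
    moreover have "\<Union> ((\<lambda>j. A j - {x}) ` K) = \<Union> (A ` K) - {x}" by auto
    ultimately show ?thesis using lt by (simp only:)
  qed simp
qed

lemma sdr_insert:
  assumes "has_sdr (J - {j0}) (\<lambda>j. A j - {x})" and "x \<in> A j0"
  shows "has_sdr J A"
proof -
  obtain f where f: "inj_on f (J - {j0})" "\<forall>j\<in>J - {j0}. f j \<in> A j - {x}"
    using assms(1) unfolding has_sdr_def by blast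
  have "inj_on (f(j0 := x)) (insert j0 (J - {j0}))"
    using f by (auto simp: inj_on_def)
  then have "inj_on (f(j0 := x)) J" by (rule inj_on_subset) auto
  moreover have "\<forall>j\<in>J. (f(j0 := x)) j \<in> A j" using f assms(2) by auto
  ultimately show ?thesis unfolding has_sdr_def by blast
qed

text \<open>Case of a critical subfamily K (covering exactly card K elements): removing its elements
  from the remaining sets preserves Hall's condition.\<close>
lemma hall_delete_critical:
  assumes fin: "finite J" "\<forall>j\<in>J. finite (A j)" and hall: "hall_condition J A"
    and K: "K \<subseteq> J" "card (\<Union> (A ` K)) = card K"
  shows "hall_condition (J - K) (\<lambda>j. A j - \<Union> (A ` K))"
  unfolding hall_condition_def
proof (intro allI impI)
  fix L assume L: "L \<subseteq> J - K"
  have KL: "K \<union> L \<subseteq> J" using L K by auto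
  have "finite (\<Union> (A ` (K \<union> L)))" using KL fin by (meson finite_UN_I finite_subset subsetD)
  then have "card (\<Union> (A ` (K \<union> L)) - \<Union> (A ` K)) = card (\<Union> (A ` (K \<union> L))) - card K"
    using K(2) by (simp add: card_Diff_subset finite_subset)
  moreover have "\<Union> ((\<lambda>j. A j - \<Union> (A ` K)) ` L) = \<Union> (A ` (K \<union> L)) - \<Union> (A ` K)" by auto
  moreover have "card (K \<union> L) \<le> card (\<Union> (A ` (K \<union> L)))"
    using KL hall unfolding hall_condition_def by blast
  moreover have "card (K \<union> L) = card K + card L"
    using L K fin(1) by (intro card_Un_disjoint) (auto intro: finite_subset)
  ultimately show "card L \<le> card (\<Union> ((\<lambda>j. A j - \<Union> (A ` K)) ` L))" by (simp only:)
qed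

lemma sdr_union:
  assumes "has_sdr K A" and "has_sdr (J - K) (\<lambda>j. A j - \<Union> (A ` K))"
  shows "has_sdr J A"
proof -
  obtain f1 where f1: "inj_on f1 K" "\<forall>j\<in>K. f1 j \<in> A j"
    using assms(1) unfolding has_sdr_def by blast
  obtain f2 where f2: "inj_on f2 (J - K)" "\<forall>j\<in>J - K. f2 j \<in> A j - \<Union> (A ` K)"
    using assms(2) unfolding has_sdr_def by blast
  define f where "f = (\<lambda>j. if j \<in> K then f1 j else f2 j)"
  have "inj_on f (K \<union> (J - K))"
  proof (rule inj_on_Un[THEN iffD2], intro conjI)
    show "inj_on f K" using f1(1) by (auto simp: f_def inj_on_def)
    show "inj_on f (J - K)" using f2(1) by (auto simp: f_def inj_on_def)
    show "f ` (K - (J - K)) \<inter> f ` (J - K - K) = {}" using f1(2) f2(2) by (auto simp: f_def)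
  qed
  then have "inj_on f J" by (rule inj_on_subset) auto
  moreover have "\<forall>j\<in>J. f j \<in> A j" using f1(2) f2(2) by (auto simp: f_def)
  ultimately show ?thesis unfolding has_sdr_def by blast
qed

theorem hall_marriage:
  assumes "finite J" "\<forall>j\<in>J. finite (A j)" "hall_condition J A"
  shows "has_sdr J A"
  using assms
proof (induction "card J" arbitrary: J A rule: less_induct)
  case less
  have hall_sub: "hall_condition K A" if "K \<subseteq> J" for K
    using less.prems(3) that unfolding hall_condition_def by blast
  show ?case
  proof (cases "\<forall>K. K \<subseteq> J \<and> K \<noteq> {} \<and> K \<noteq> J \<longrightarrow> card K < card (\<Union> (A ` K))")
    case strict: True
    show ?thesis
    proof (cases "J = {}")
      case False
      then obtain j0 where j0: "j0 \<in> J" by auto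
      have "card {j0} \<le> card (\<Union> (A ` {j0}))"
        using less.prems(3) j0 unfolding hall_condition_def by blast
      then obtain x where x: "x \<in> A j0" by fastforce
      have "card (J - {j0}) < card J" using less.prems(1) j0 by (rule card_Diff1_less)
      then have "has_sdr (J - {j0}) (\<lambda>j. A j - {x})"
        using less.prems(1,2) hall_delete_element[OF less.prems(1,2) strict j0]
        by (intro less.hyps) auto
      then show ?thesis using x by (rule sdr_insert)
    qed (simp add: has_sdr_def)
  next
    case False
    then obtain K where K: "K \<subseteq> J" "K \<noteq> {}" "K \<noteq> J" "card (\<Union> (A ` K)) \<le> card K"
      by (auto simp: not_less)
    then have crit: "card (\<Union> (A ` K)) = card K"
      using less.prems(3) unfolding hall_condition_def by (simp add: le_antisym)
    have finK: "finite K" using K(1) less.prems(1) finite_subset by blast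
    have "card K < card J" using K less.prems(1) by (meson psubsetI psubset_card_mono)
    then have "has_sdr K A" using less.prems K(1) finK hall_sub by (intro less.hyps) auto
    moreover have "has_sdr (J - K) (\<lambda>j. A j - \<Union> (A ` K))"
    proof (rule less.hyps)
      have "0 < card K" using K(2) finK by (simp add: card_gt_0_iff)
      moreover have "card K \<le> card J" using K(1) less.prems(1) by (simp add: card_mono)
      ultimately show "card (J - K) < card J" using finK K(1) by (simp add: card_Diff_subset)
    qed (use less.prems hall_delete_critical[OF less.prems K(1) crit] in auto)
    ultimately show ?thesis by (rule sdr_union)
  qed
qed

text \<open>A regular incidence structure with b = v*c blocks of size k > 0, every point on k*c blocks,
  admits a choice of one point per block hitting every point exactly c times: Hall's theorem
  applied to the blocks and c copies of every point.\<close>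
lemma balanced_choice:
  fixes F :: "'j \<Rightarrow> 'p set"
  assumes fin: "finite J" "finite V"
    and blocks: "\<forall>j\<in>J. F j \<subseteq> V \<and> card (F j) = k" and k: "0 < k"
    and degree: "\<forall>x\<in>V. card {j\<in>J. x \<in> F j} = k * c"
    and size: "card J = card V * c"
  shows "\<exists>f. (\<forall>j\<in>J. f j \<in> F j) \<and> (\<forall>x\<in>V. card {j\<in>J. f j = x} = c)"
proof -
  define A where "A = (\<lambda>j. F j \<times> {0..<c})"
  have finA: "\<forall>j\<in>J. finite (A j)" using blocks fin(2) unfolding A_def by (auto intro: finite_subset)
  have hall: "hall_condition J A"
    unfolding hall_condition_def
  proof (intro allI impI)
    fix K assume K: "K \<subseteq> J"
    define U where "U = \<Union> (A ` K)"
    have finK: "finite K" using K fin(1) finite_subset by blast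
    have UV: "U \<subseteq> V \<times> {0..<c}" unfolding U_def A_def using blocks K by fastforce
    have finU: "finite U" using UV fin(2) finite_subset by blast
    have "card K * (k * c) = (\<Sum>j\<in>K. card {p\<in>U. p \<in> A j})"
    proof -
      have "card {p\<in>U. p \<in> A j} = k * c" if "j \<in> K" for j
      proof -
        have "{p\<in>U. p \<in> A j} = A j" using that unfolding U_def by auto
        then show ?thesis using blocks K that unfolding A_def by (auto simp: card_cartesian_product)
      qed
      then show ?thesis by simp
    qed
    also have "\<dots> = (\<Sum>p\<in>U. card {j\<in>K. p \<in> A j})" by (rule double_counting[OF finK finU])
    also have "\<dots> \<le> (\<Sum>p\<in>U. k * c)"
    proof (rule sum_mono)
      fix p assume p: "p \<in> U"
      have "{j\<in>K. p \<in> A j} \<subseteq> {j\<in>J. fst p \<in> F j}" using K unfolding A_def by auto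
      then have "card {j\<in>K. p \<in> A j} \<le> card {j\<in>J. fst p \<in> F j}" using fin(1) by (intro card_mono) auto
      also have "\<dots> = k * c" using degree p UV by auto
      finally show "card {j\<in>K. p \<in> A j} \<le> k * c" .
    qed
    also have "\<dots> = card U * (k * c)" by simp
    finally have "card K * (k * c) \<le> card U * (k * c)" .
    moreover have "0 < c \<or> K = {}" using K size fin(1) by (cases "c = 0") auto
    ultimately show "card K \<le> card (\<Union> (A ` K))" unfolding U_def using k by auto
  qed
  obtain g where g: "inj_on g J" "\<forall>j\<in>J. g j \<in> A j"
    using hall_marriage[OF fin(1) finA hall] unfolding has_sdr_def by blast
  have "g ` J \<subseteq> V \<times> {0..<c}" using g(2) blocks unfolding A_def by fastforce
  moreover have "card (g ` J) = card (V \<times> {0..<c})"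
    using card_image[OF g(1)] size by (simp add: card_cartesian_product)
  ultimately have img: "g ` J = V \<times> {0..<c}" using fin(2) by (intro card_subset_eq) auto
  have "card {j\<in>J. fst (g j) = x} = c" if "x \<in> V" for x
  proof -
    have "g ` {j\<in>J. fst (g j) = x} = {p \<in> g ` J. fst p = x}" by auto
    also have "\<dots> = {x} \<times> {0..<c}" using img that by auto
    finally have "card (g ` {j\<in>J. fst (g j) = x}) = c" by (simp add: card_cartesian_product)
    moreover have "inj_on g {j\<in>J. fst (g j) = x}" using g(1) by (rule inj_on_subset) auto
    ultimately show ?thesis by (simp add: card_image)
  qed
  moreover have "\<forall>j\<in>J. fst (g j) \<in> F j" using g(2) unfolding A_def by auto
  ultimately show ?thesis by (intro exI[of _ "\<lambda>j. fst (g j)"]) blast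
qed

text \<open>Iterating the balanced choice orders all blocks so that every point appears in every
  position exactly c times.\<close>
theorem balanced_ordering:
  fixes F :: "'j \<Rightarrow> 'p set"
  assumes fin: "finite J" "finite V"
    and "\<forall>j\<in>J. F j \<subseteq> V \<and> card (F j) = k"
    and "\<forall>x\<in>V. card {j\<in>J. x \<in> F j} = k * c"
    and size: "card J = card V * c"
  shows "\<exists>\<sigma>. (\<forall>j\<in>J. bij_betw (\<sigma> j) {0..<k} (F j)) \<and>
             (\<forall>x\<in>V. \<forall>s<k. card {j\<in>J. \<sigma> j s = x} = c)"
  using assms(3,4)
proof (induction k arbitrary: F)
  case 0
  then have "F j = {}" if "j \<in> J" for j using that fin(2) by (meson card_0_eq finite_subset)
  then show ?case by (intro exI[of _ "\<lambda>_ _. undefined"]) (auto simp: bij_betw_def)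
next
  case (Suc k)
  obtain f where f: "\<forall>j\<in>J. f j \<in> F j" "\<forall>x\<in>V. card {j\<in>J. f j = x} = c"
    using balanced_choice[OF fin Suc.prems(1) _ Suc.prems(2) size] by auto
  define F' where "F' = (\<lambda>j. F j - {f j})"
  have finF: "finite (F j)" if "j \<in> J" for j using Suc.prems(1) fin(2) that by (meson finite_subset)
  have "\<forall>j\<in>J. F' j \<subseteq> V \<and> card (F' j) = k"
    using Suc.prems(1) f(1) finF unfolding F'_def by (auto simp: card_Diff_singleton)
  moreover have "\<forall>x\<in>V. card {j\<in>J. x \<in> F' j} = k * c"
  proof
    fix x assume x: "x \<in> V"
    have "{j\<in>J. x \<in> F' j} = {j\<in>J. x \<in> F j} - {j\<in>J. f j = x}" unfolding F'_def by auto
    moreover have "{j\<in>J. f j = x} \<subseteq> {j\<in>J. x \<in> F j}" using f(1) by auto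
    ultimately show "card {j\<in>J. x \<in> F' j} = k * c"
      using Suc.prems(2) f(2) x fin(1) by (simp add: card_Diff_subset)
  qed
  ultimately obtain \<sigma>' where \<sigma>': "\<forall>j\<in>J. bij_betw (\<sigma>' j) {0..<k} (F' j)"
      "\<forall>x\<in>V. \<forall>s<k. card {j\<in>J. \<sigma>' j s = x} = c"
    using Suc.IH by blast
  define \<sigma> where "\<sigma> = (\<lambda>j s. if s = k then f j else \<sigma>' j s)"
  have "bij_betw (\<sigma> j) {0..<Suc k} (F j)" if j: "j \<in> J" for j
  proof -
    have "bij_betw (\<sigma> j) {0..<k} (F' j)"
      using \<sigma>'(1) j by (subst bij_betw_cong[of _ _ "\<sigma>' j"]) (auto simp: \<sigma>_def)
    then have "bij_betw (\<sigma> j) ({0..<k} \<union> {k}) (F' j \<union> {\<sigma> j k})"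
      by (rule notIn_Un_bij_betw[rotated 2]) (auto simp: \<sigma>_def F'_def)
    moreover have "F' j \<union> {\<sigma> j k} = F j" using f(1) j unfolding \<sigma>_def F'_def by auto
    ultimately show ?thesis by (simp add: atLeast0_lessThan_Suc Un_commute)
  qed
  moreover have "card {j\<in>J. \<sigma> j s = x} = c" if "x \<in> V" "s < Suc k" for x s
    using f(2) \<sigma>'(2) that by (cases "s = k") (auto simp: \<sigma>_def)
  ultimately show ?case by blast
qed

definition residual_strategy :: "(('m \<times> bool) list \<Rightarrow> 'm) \<Rightarrow> bool \<Rightarrow> ('m \<times> bool) list \<Rightarrow> 'm" where
  "residual_strategy q a = (\<lambda>h. q ((q [], a) # h))"

lemma vhist_first_query:
  "vhist q X (Suc n) = (q [], q [] \<in> X) # vhist (residual_strategy q (q [] \<in> X)) X n"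
  by (induction n) (auto simp: residual_strategy_def)

lemma offline_out_residual:
  assumes "(q [] \<in> X) = a"
  shows "offline_out q X (Suc n) = offline_out (residual_strategy q a) X n"
  using assms unfolding offline_out_def by (simp only: vhist_first_query) (simp add: residual_strategy_def)

lemma queries_residual:
  assumes "(q [] \<in> X) = a"
  shows "fst ` set (vhist q X (Suc n)) = insert (q []) (fst ` set (vhist (residual_strategy q a) X n))"
  using assms by (simp only: vhist_first_query) simp

text \<open>A concrete admissible strategy: query 0, 1, ..., i-1 and output i.\<close>
definition counting_strategy :: "nat \<Rightarrow> (nat \<times> bool) list \<Rightarrow> nat" where
  "counting_strategy v h = (if length h < v then length h else 0)"

lemma vhist_length: "length (vhist q X n) = n"
  by (induction n) auto

lemma counting_strategy_queries:
  "n \<le> v \<Longrightarrow> fst ` set (vhist (counting_strategy v) X n) = {0..<n}"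
  by (induction n) (auto simp: counting_strategy_def vhist_length atLeast0_lessThan_Suc)

lemma counting_strategy_admissible:
  assumes "i < v"
  shows "offline_strategy S {0..<v} E enc i (counting_strategy v)"
proof -
  have "offline_out (counting_strategy v) X i = i" for X
    using assms by (simp add: offline_out_def counting_strategy_def vhist_length)
  then show ?thesis
    using assms counting_strategy_queries[of i v]
    by (auto simp: offline_strategy_def counting_strategy_def)
qed

text \<open>The arithmetic of one fresh query in the security induction.\<close>
lemma martingale_arith:
  fixes N K S1 S2 F1 F2 :: nat
  assumes "2 \<le> N" "1 \<le> K"
    and "(N - 1) * S1 = (K - 1) * F1" "(N - 1) * S2 = K * F2" "N * F1 = K * (F1 + F2)"
  shows "N * (S1 + S2) = K * (F1 + F2)"
proof -
  obtain n k where N: "N = n + 1" and K: "K = k + 1" and n: "0 < n"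
    using assms(1,2) by (cases N; cases K) auto
  have "n * S1 = k * F1" "n * S2 = (k + 1) * F2" "(n + 1) * F1 = (k + 1) * (F1 + F2)"
    using assms(3-5) unfolding N K by simp_all
  then have h1: "int n * int S1 = int k * int F1" and h2: "int n * int S2 = (int k + 1) * int F2"
    and h3: "(int n + 1) * int F1 = (int k + 1) * (int F1 + int F2)"
    by (metis of_nat_mult of_nat_add of_nat_1)+
  have "int n * ((int n + 1) * (int S1 + int S2)) = int n * ((int k + 1) * (int F1 + int F2))"
    using h1 h2 h3 by algebra
  then have "(int n + 1) * (int S1 + int S2) = (int k + 1) * (int F1 + int F2)" using n by simp
  then have "int ((n + 1) * (S1 + S2)) = int ((k + 1) * (F1 + F2))"
    by (metis of_nat_mult of_nat_add of_nat_1)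
  then show ?thesis unfolding N K by (simp only: of_nat_eq_iff)
qed

locale indexed_design =
  fixes t v k lam b :: nat and F :: "nat \<Rightarrow> nat set"
  assumes t_pos: "1 \<le> t" and t_le_k: "t \<le> k" and k_le_v: "k \<le> v"
    and block_points: "\<And>j. j < b \<Longrightarrow> F j \<subseteq> {0..<v}"
    and block_size: "\<And>j. j < b \<Longrightarrow> card (F j) = k"
    and balance: "\<And>T. T \<subseteq> {0..<v} \<Longrightarrow> card T = t \<Longrightarrow> card {j\<in>{0..<b}. T \<subseteq> F j} = lam"
begin

lemma finite_block: "j < b \<Longrightarrow> finite (F j)"
  using block_points finite_subset by blast

lemma subset_count_const:
  assumes "s \<le> t"
  shows "\<exists>c. \<forall>S. S \<subseteq> {0..<v} \<longrightarrow> card S = s \<longrightarrow> card {j\<in>{0..<b}. S \<subseteq> F j} = c"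
  using assms
proof (induction rule: inc_induct)
  case base
  then show ?case using balance by blast
next
  case (step n)
  then obtain c where c: "\<forall>S. S \<subseteq> {0..<v} \<longrightarrow> card S = Suc n \<longrightarrow> card {j\<in>{0..<b}. S \<subseteq> F j} = c"
    by blast
  have "card {j\<in>{0..<b}. S \<subseteq> F j} = (v - n) * c div (k - n)"
    if S: "S \<subseteq> {0..<v}" "card S = n" for S
  proof -
    define Q where "Q = {j\<in>{0..<b}. S \<subseteq> F j}"
    have finS: "finite S" using S(1) finite_subset by blast
    have "card Q * (k - n) = (\<Sum>j\<in>Q. card {x\<in>{0..<v} - S. x \<in> F j})"
    proof -
      have "card {x\<in>{0..<v} - S. x \<in> F j} = k - n" if "j \<in> Q" for j
      proof -
        have j: "j < b" "S \<subseteq> F j" using that unfolding Q_def by auto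
        then have "{x\<in>{0..<v} - S. x \<in> F j} = F j - S" using block_points[OF j(1)] by auto
        then show ?thesis using j block_size finS S(2) by (simp add: card_Diff_subset)
      qed
      then show ?thesis by simp
    qed
    also have "\<dots> = (\<Sum>x\<in>{0..<v} - S. card {j\<in>Q. x \<in> F j})"
      by (rule double_counting[symmetric]) (auto simp: Q_def)
    also have "\<dots> = (\<Sum>x\<in>{0..<v} - S. c)"
    proof (rule sum.cong)
      fix x assume x: "x \<in> {0..<v} - S"
      have "{j\<in>Q. x \<in> F j} = {j\<in>{0..<b}. insert x S \<subseteq> F j}" unfolding Q_def by auto
      moreover have "card (insert x S) = Suc n" using x S finS by simp
      ultimately show "card {j\<in>Q. x \<in> F j} = c" using c[rule_format, of "insert x S"] x S by simp
    qed simp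
    also have "\<dots> = (v - n) * c" using S finS by (simp add: card_Diff_subset)
    finally have "card Q * (k - n) = (v - n) * c" .
    moreover have "0 < k - n" using step.hyps t_le_k by simp
    ultimately show ?thesis unfolding Q_def by (metis nonzero_mult_div_cancel_right not_gr0)
  qed
  then show ?case by blast
qed

definition consistent :: "nat set \<Rightarrow> nat set \<Rightarrow> nat set" where
  "consistent A R = {j\<in>{0..<b}. A \<subseteq> F j \<and> F j \<inter> R = {}}"

lemma finite_consistent: "finite (consistent A R)"
  unfolding consistent_def by simp

lemma consistent_split:
  "consistent A R = consistent (insert m A) R \<union> consistent A (insert m R)"
  "consistent (insert m A) R \<inter> consistent A (insert m R) = {}"
  unfolding consistent_def by auto

lemma consistent_count_const:
  assumes "a + r \<le> t"
  shows "\<exists>c. \<forall>A R. A \<subseteq> {0..<v} \<longrightarrow> R \<subseteq> {0..<v} \<longrightarrow> A \<inter> R = {} \<longrightarrow>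
             card A = a \<longrightarrow> card R = r \<longrightarrow> card (consistent A R) = c"
  using assms
proof (induction r arbitrary: a)
  case 0
  then obtain c where c: "\<forall>S. S \<subseteq> {0..<v} \<longrightarrow> card S = a \<longrightarrow> card {j\<in>{0..<b}. S \<subseteq> F j} = c"
    using subset_count_const[of a] by auto
  have "card (consistent A R) = c"
    if "A \<subseteq> {0..<v}" "R \<subseteq> {0..<v}" "card A = a" "card R = 0" for A R
  proof -
    have "R = {}" using that(2,4) finite_subset by fastforce
    then have "consistent A R = {j\<in>{0..<b}. A \<subseteq> F j}" unfolding consistent_def by auto
    then show ?thesis using c that by simp
  qed
  then show ?case by (intro exI[of _ c]) auto
next
  case (Suc r)
  obtain c1 where c1: "\<forall>A R. A \<subseteq> {0..<v} \<longrightarrow> R \<subseteq> {0..<v} \<longrightarrow> A \<inter> R = {} \<longrightarrow>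
             card A = a \<longrightarrow> card R = r \<longrightarrow> card (consistent A R) = c1"
    using Suc.IH[of a] Suc.prems by auto
  obtain c2 where c2: "\<forall>A R. A \<subseteq> {0..<v} \<longrightarrow> R \<subseteq> {0..<v} \<longrightarrow> A \<inter> R = {} \<longrightarrow>
             card A = Suc a \<longrightarrow> card R = r \<longrightarrow> card (consistent A R) = c2"
    using Suc.IH[of "Suc a"] Suc.prems by auto
  have "card (consistent A R) = c1 - c2"
    if AR: "A \<subseteq> {0..<v}" "R \<subseteq> {0..<v}" "A \<inter> R = {}" "card A = a" "card R = Suc r" for A R
  proof -
    obtain x where x: "x \<in> R" using AR(5) by fastforce
    have fin: "finite A" "finite R" using AR(1,2) finite_subset by auto
    have "x \<notin> A" using AR(3) x by auto
    then have shrunk: "R - {x} \<subseteq> {0..<v}" "card (R - {x}) = r" "insert x A \<subseteq> {0..<v}"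
      "A \<inter> (R - {x}) = {}" "insert x A \<inter> (R - {x}) = {}" "card (insert x A) = Suc a"
      using AR fin x by auto
    have "consistent A R = consistent A (R - {x}) - consistent (insert x A) (R - {x})"
      using consistent_split[where A=A and R="R - {x}" and m=x] x by (auto simp: insert_absorb)
    moreover have "card (consistent A (R - {x})) = c1"
      using c1 AR(1,4) shrunk by blast
    moreover have "card (consistent (insert x A) (R - {x})) = c2"
      using c2 shrunk by blast
    moreover have "consistent (insert x A) (R - {x}) \<subseteq> consistent A (R - {x})"
      unfolding consistent_def by auto
    ultimately show ?thesis by (simp add: card_Diff_subset finite_consistent)
  qed
  then show ?case by (intro exI[of _ "c1 - c2"]) auto
qed

lemma extension_ratio:
  assumes AR: "A \<subseteq> {0..<v}" "R \<subseteq> {0..<v}" "A \<inter> R = {}" "card A + card R < t"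
    and m: "m \<in> {0..<v} - (A \<union> R)"
  shows "(v - card A - card R) * card (consistent (insert m A) R) = (k - card A) * card (consistent A R)"
proof -
  have fin: "finite A" "finite R" using AR(1,2) finite_subset by auto
  obtain c where c: "\<forall>A' R'. A' \<subseteq> {0..<v} \<longrightarrow> R' \<subseteq> {0..<v} \<longrightarrow> A' \<inter> R' = {} \<longrightarrow>
      card A' = Suc (card A) \<longrightarrow> card R' = card R \<longrightarrow> card (consistent A' R') = c"
    using consistent_count_const[of "Suc (card A)" "card R"] AR(4) by auto
  define P where "P = {0..<v} - (A \<union> R)"
  have extend: "card (consistent (insert x A) R) = c" if "x \<in> P" for x
  proof -
    have "insert x A \<subseteq> {0..<v}" "insert x A \<inter> R = {}" "card (insert x A) = Suc (card A)"
      using that AR fin unfolding P_def by auto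
    then show ?thesis using c AR(2) by blast
  qed
  have "card P * c = (\<Sum>x\<in>P. card {j\<in>consistent A R. x \<in> F j})"
  proof -
    have "{j\<in>consistent A R. x \<in> F j} = consistent (insert x A) R" for x
      unfolding consistent_def by auto
    then show ?thesis using extend by simp
  qed
  also have "\<dots> = (\<Sum>j\<in>consistent A R. card {x\<in>P. x \<in> F j})"
    by (rule double_counting) (auto simp: P_def finite_consistent)
  also have "\<dots> = (\<Sum>j\<in>consistent A R. k - card A)"
  proof (rule sum.cong)
    fix j assume "j \<in> consistent A R"
    then have j: "j < b" "A \<subseteq> F j" "F j \<inter> R = {}" unfolding consistent_def by auto
    then have "{x\<in>P. x \<in> F j} = F j - A" using block_points[OF j(1)] unfolding P_def by auto
    then show "card {x\<in>P. x \<in> F j} = k - card A" using j block_size fin by (simp add: card_Diff_subset)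
  qed simp
  finally have "card P * c = card (consistent A R) * (k - card A)" by simp
  moreover have "card P = v - card A - card R"
    using AR fin unfolding P_def by (simp add: card_Diff_subset Int_commute card_Un_disjoint)
  ultimately show ?thesis using extend[of m] m unfolding P_def by (simp add: mult.commute)
qed

definition success_keys :: "((nat \<times> bool) list \<Rightarrow> nat) \<Rightarrow> nat \<Rightarrow> nat set \<Rightarrow> nat set" where
  "success_keys q i J = {j\<in>J. offline_out q (F j) i \<in> F j}"

lemma success_keys_Un: "success_keys q i (J1 \<union> J2) = success_keys q i J1 \<union> success_keys q i J2"
  unfolding success_keys_def by auto

lemma success_keys_residual:
  assumes "\<forall>j\<in>J. (q [] \<in> F j) = a"
  shows "success_keys q (Suc i) J = success_keys (residual_strategy q a) i J"
proof -
  have "offline_out q (F j) (Suc i) = offline_out (residual_strategy q a) (F j) i" if "j \<in> J" for j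
    using assms that by (intro offline_out_residual) auto
  then show ?thesis unfolding success_keys_def by auto
qed

definition fresh_output :: "((nat \<times> bool) list \<Rightarrow> nat) \<Rightarrow> nat \<Rightarrow> nat set \<Rightarrow> nat set \<Rightarrow> bool" where
  "fresh_output q i A R \<longleftrightarrow>
     (\<forall>j\<in>consistent A R. offline_out q (F j) i \<notin> A \<union> R \<union> fst ` set (vhist q (F j) i))"

lemma fresh_output_residual:
  assumes fresh: "fresh_output q (Suc i) A R"
    and sub: "consistent A' R' \<subseteq> consistent A R" "A' \<union> R' \<subseteq> insert (q []) (A \<union> R)"
    and answer: "\<forall>j\<in>consistent A' R'. (q [] \<in> F j) = a"
  shows "fresh_output (residual_strategy q a) i A' R'"
  unfolding fresh_output_def
proof
  fix j assume j: "j \<in> consistent A' R'"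
  have "offline_out q (F j) (Suc i) \<notin> A \<union> R \<union> fst ` set (vhist q (F j) (Suc i))"
    using fresh sub(1) j unfolding fresh_output_def by blast
  moreover note offline_out_residual[of q "F j" a i] queries_residual[of q "F j" a i]
  ultimately show "offline_out (residual_strategy q a) (F j) i
      \<notin> A' \<union> R' \<union> fst ` set (vhist (residual_strategy q a) (F j) i)"
    using sub(2) answer j by (auto simp del: vhist.simps)
qed

lemma fresh_query_combine:
  assumes AR: "A \<subseteq> {0..<v}" "R \<subseteq> {0..<v}" "A \<inter> R = {}" "card A + card R + 1 < t"
    and m: "m \<in> {0..<v} - (A \<union> R)"
    and accept: "(v - card A - card R - 1) * S1 = (k - card A - 1) * card (consistent (insert m A) R)"
    and reject: "(v - card A - card R - 1) * S2 = (k - card A) * card (consistent A (insert m R))"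
  shows "(v - card A - card R) * (S1 + S2) = (k - card A) * card (consistent A R)"
proof -
  have "card (consistent A R) = card (consistent (insert m A) R) + card (consistent A (insert m R))"
    using consistent_split[where A=A and R=R and m=m] by (simp add: card_Un_disjoint finite_consistent)
  moreover have "2 \<le> v - card A - card R" "1 \<le> k - card A" using AR(4) t_le_k k_le_v by simp_all
  ultimately show ?thesis
    using martingale_arith[OF _ _ accept reject] extension_ratio[OF AR(1-3) _ m] AR(4) by simp
qed

text \<open>Queries to known messages change nothing; a fresh query
  splits the consistent keys and the two halves recombine by fresh_query_combine.\<close>
lemma consistent_success_count:
  assumes "A \<subseteq> {0..<v}" "R \<subseteq> {0..<v}" "A \<inter> R = {}" "card A + card R + i < t"
    and "\<forall>h. q h \<in> {0..<v}" and "fresh_output q i A R"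
  shows "(v - card A - card R) * card (success_keys q i (consistent A R)) =
         (k - card A) * card (consistent A R)"
  using assms
proof (induction i arbitrary: A R q)
  case 0
  show ?case
  proof (cases "consistent A R = {}")
    case False
    then obtain j0 where "j0 \<in> consistent A R" by auto
    then have m: "q [] \<in> {0..<v} - (A \<union> R)"
      using "0.prems"(5,6) unfolding fresh_output_def offline_out_def by auto
    have "success_keys q 0 (consistent A R) = consistent (insert (q []) A) R"
      unfolding success_keys_def offline_out_def consistent_def by auto
    then show ?thesis using extension_ratio[OF "0.prems"(1-3) _ m] "0.prems"(4) by simp
  qed (simp add: success_keys_def)
next
  case (Suc i)
  let ?m = "q []"
  have budget: "card A + card R + i < t" using Suc.prems(4) by simp
  have range: "\<forall>h. residual_strategy q a h \<in> {0..<v}" for a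
    using Suc.prems(5) unfolding residual_strategy_def by auto
  show ?case
  proof (cases "?m \<in> A \<union> R")
    case True
    have same: "\<forall>j\<in>consistent A R. (?m \<in> F j) = (?m \<in> A)"
      using True Suc.prems(3) unfolding consistent_def by auto
    have "fresh_output (residual_strategy q (?m \<in> A)) i A R"
      by (rule fresh_output_residual[OF Suc.prems(6) _ _ same]) auto
    then show ?thesis
      unfolding success_keys_residual[where q=q, OF same] by (rule Suc.IH[OF Suc.prems(1-3) budget range])
  next
    case False
    then have m: "?m \<in> {0..<v} - (A \<union> R)" using Suc.prems(5) by auto
    have fin: "finite A" "finite R" using Suc.prems(1,2) finite_subset by auto
    note split = consistent_split[where A=A and R=R and m="?m"]
    have accepted: "\<forall>j\<in>consistent (insert ?m A) R. (?m \<in> F j) = True"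
      and rejected: "\<forall>j\<in>consistent A (insert ?m R). (?m \<in> F j) = False"
      unfolding consistent_def by auto
    have "(v - card (insert ?m A) - card R) *
        card (success_keys (residual_strategy q True) i (consistent (insert ?m A) R)) =
        (k - card (insert ?m A)) * card (consistent (insert ?m A) R)"
    proof (rule Suc.IH[OF _ Suc.prems(2) _ _ range])
      show "fresh_output (residual_strategy q True) i (insert ?m A) R"
        by (rule fresh_output_residual[OF Suc.prems(6) _ _ accepted]) (auto simp: split)
    qed (use Suc.prems m fin in auto)
    moreover have "(v - card A - card (insert ?m R)) *
        card (success_keys (residual_strategy q False) i (consistent A (insert ?m R))) =
        (k - card A) * card (consistent A (insert ?m R))"
    proof (rule Suc.IH[OF Suc.prems(1) _ _ _ range])
      show "fresh_output (residual_strategy q False) i A (insert ?m R)"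
        by (rule fresh_output_residual[OF Suc.prems(6) _ _ rejected]) (auto simp: split)
    qed (use Suc.prems m fin in auto)
    moreover have "card (success_keys q (Suc i) (consistent A R)) =
        card (success_keys (residual_strategy q True) i (consistent (insert ?m A) R)) +
        card (success_keys (residual_strategy q False) i (consistent A (insert ?m R)))"
      unfolding split(1) success_keys_Un success_keys_residual[where q=q, OF accepted]
        success_keys_residual[where q=q, OF rejected]
      using split(2) by (intro card_Un_disjoint) (auto simp: success_keys_def finite_consistent)
    ultimately show ?thesis
      using fresh_query_combine[OF Suc.prems(1-3) _ m] Suc.prems(4) m fin by (simp add: diff_diff_add)
  qed
qed

lemma offline_success_count:
  assumes "\<forall>h. q h \<in> {0..<v}"
    and "\<forall>j<b. offline_out q (F j) (t - 1) \<notin> fst ` set (vhist q (F j) (t - 1))"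
  shows "v * card (success_keys q (t - 1) {0..<b}) = k * b"
proof -
  have all: "consistent {} {} = {0..<b}" unfolding consistent_def by auto
  have "fresh_output q (t - 1) {} {}" using assms(2) unfolding fresh_output_def all by auto
  then show ?thesis
    using consistent_success_count[of "{}" "{}" "t - 1" q] assms(1) t_pos unfolding all by simp
qed

lemma replication_number:
  assumes "x < v"
  shows "v * card {j\<in>{0..<b}. x \<in> F j} = b * k"
proof -
  obtain r where r: "\<forall>S. S \<subseteq> {0..<v} \<longrightarrow> card S = 1 \<longrightarrow> card {j\<in>{0..<b}. S \<subseteq> F j} = r"
    using subset_count_const[of 1] t_pos by auto
  have point: "card {j\<in>{0..<b}. y \<in> F j} = r" if "y < v" for y
    using r[rule_format, of "{y}"] that by simp
  have "v * r = (\<Sum>y\<in>{0..<v}. card {j\<in>{0..<b}. y \<in> F j})" using point by simp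
  also have "\<dots> = (\<Sum>j\<in>{0..<b}. card {y\<in>{0..<v}. y \<in> F j})" by (rule double_counting) auto
  also have "\<dots> = (\<Sum>j\<in>{0..<b}. k)"
  proof (rule sum.cong)
    fix j assume "j \<in> {0..<b}"
    then have "{y\<in>{0..<v}. y \<in> F j} = F j" using block_points[of j] by auto
    then show "card {y\<in>{0..<v}. y \<in> F j} = k" using block_size \<open>j \<in> {0..<b}\<close> by simp
  qed simp
  finally show ?thesis using point[OF assms] by simp
qed

text \<open>The number of blocks, by double counting pairs (t-subset, block).\<close>
lemma block_count: "b * (k choose t) = lam * (v choose t)"
proof -
  define P where "P = {T. T \<subseteq> {0..<v} \<and> card T = t}"
  have "(v choose t) * lam = (\<Sum>T\<in>P. card {j\<in>{0..<b}. T \<subseteq> F j})"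
    using balance n_subsets[of "{0..<v}" t] unfolding P_def by simp
  also have "\<dots> = (\<Sum>j\<in>{0..<b}. card {T\<in>P. T \<subseteq> F j})"
    by (rule double_counting) (auto simp: P_def)
  also have "\<dots> = (\<Sum>j\<in>{0..<b}. k choose t)"
  proof (rule sum.cong)
    fix j assume j: "j \<in> {0..<b}"
    then have "{T\<in>P. T \<subseteq> F j} = {T. T \<subseteq> F j \<and> card T = t}" using block_points unfolding P_def by auto
    then show "card {T\<in>P. T \<subseteq> F j} = k choose t" using n_subsets[OF finite_block[of j]] block_size[of j] j by simp
  qed simp
  finally show ?thesis by (simp add: mult.commute)
qed

end

lemma relabel_subset_iff:
  assumes g: "bij_betw g X V" and Y: "Y \<subseteq> X" and T: "T \<subseteq> V"
  shows "T \<subseteq> g ` Y \<longleftrightarrow> inv_into X g ` T \<subseteq> Y"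
proof
  assume "T \<subseteq> g ` Y"
  then have "inv_into X g ` T \<subseteq> inv_into X g ` g ` Y" by (rule image_mono)
  also have "\<dots> = Y" using g Y by (simp add: bij_betw_def inv_into_image_cancel)
  finally show "inv_into X g ` T \<subseteq> Y" .
next
  assume "inv_into X g ` T \<subseteq> Y"
  then have "g ` inv_into X g ` T \<subseteq> g ` Y" by (rule image_mono)
  moreover have "g ` inv_into X g ` T = T" using g T by (simp add: bij_betw_def image_inv_into_cancel)
  ultimately show "T \<subseteq> g ` Y" by simp
qed

lemma indexed_design_exists:
  assumes "1 \<le> t" "t \<le> k" "k \<le> v" and design: "is_design t v k lam X B"
  shows "\<exists>F. indexed_design t v k lam (card B) F"
proof -
  have finX: "finite X" and cardX: "card X = v" and blocks: "\<forall>Bl\<in>B. Bl \<subseteq> X \<and> card Bl = k"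
    and balance: "\<forall>T. T \<subseteq> X \<and> card T = t \<longrightarrow> card {Bl\<in>B. T \<subseteq> Bl} = lam"
    using design unfolding is_design_def by auto
  have finB: "finite B" using blocks finX by (meson Pow_iff finite_Pow_iff finite_subset subsetI)
  obtain g where g: "bij_betw g X {0..<v}" using ex_bij_betw_finite_nat[OF finX] cardX by auto
  obtain idx where idx: "bij_betw idx {0..<card B} B" using ex_bij_betw_nat_finite[OF finB] by auto
  have idx_block: "idx j \<subseteq> X" "card (idx j) = k" if "j < card B" for j
  proof -
    have "idx j \<in> B" using idx that by (auto simp: bij_betw_def)
    then show "idx j \<subseteq> X" "card (idx j) = k" using blocks by auto
  qed
  have ginj: "inj_on g X" using g by (simp add: bij_betw_def)
  show ?thesis
  proof (intro exI[of _ "\<lambda>j. g ` idx j"] indexed_design.intro)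
    fix j assume j: "j < card B"
    show "g ` idx j \<subseteq> {0..<v}" using g idx_block[OF j] by (auto simp: bij_betw_def)
    show "card (g ` idx j) = k" using idx_block[OF j] inj_on_subset[OF ginj] by (simp add: card_image)
  next
    fix T assume T: "T \<subseteq> {0..<v}" "card T = t"
    define T0 where "T0 = inv_into X g ` T"
    have T0: "T0 \<subseteq> X" "card T0 = t"
      using bij_betw_inv_into[OF g] T unfolding T0_def
      by (auto simp: bij_betw_def card_image inj_on_subset)
    have relabel: "{j\<in>{0..<card B}. T \<subseteq> g ` idx j} = {j\<in>{0..<card B}. T0 \<subseteq> idx j}"
      using relabel_subset_iff[OF g idx_block(1) T(1)] unfolding T0_def by auto
    have "inj_on idx {j\<in>{0..<card B}. T0 \<subseteq> idx j}"
      using idx unfolding bij_betw_def by (blast intro: inj_on_subset)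
    then have "card {j\<in>{0..<card B}. T0 \<subseteq> idx j} = card (idx ` {j\<in>{0..<card B}. T0 \<subseteq> idx j})"
      by (simp add: card_image)
    moreover have "idx ` {j\<in>{0..<card B}. T0 \<subseteq> idx j} = {Bl \<in> idx ` {0..<card B}. T0 \<subseteq> Bl}"
      by auto
    moreover have "idx ` {0..<card B} = B" using idx by (simp add: bij_betw_def)
    ultimately show "card {j\<in>{0..<card B}. T \<subseteq> g ` idx j} = lam"
      unfolding relabel using balance T0 by simp
  qed (use assms in auto)
qed

lemma uniform_perfect_secrecy:
  assumes "finite S" and pairs: "\<forall>s\<in>S. \<forall>m\<in>M. card {e\<in>E. enc e s = m} = c"
  shows "perfect_secrecy S M E enc (\<lambda>s. 1 / real (card S)) (\<lambda>e. 1 / real (card E))"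
  unfolding perfect_secrecy_def
proof (intro ballI)
  fix s m assume s: "s \<in> S" and m: "m \<in> M"
  let ?pS = "\<lambda>s. 1 / real (card S)" and ?pE = "\<lambda>e. 1 / real (card E)"
  have joint: "p_SM S E enc ?pS ?pE s' m = real c / real (card E) / real (card S)" if "s' \<in> S" for s'
    using pairs that m unfolding p_SM_def by simp
  have "p_M S E enc ?pS ?pE m = real (card S) * (real c / real (card E) / real (card S))"
    unfolding p_M_def using joint by simp
  also have "\<dots> = real c / real (card E)" using s assms(1) card_gt_0_iff[of S] by auto
  finally show "p_SM S E enc ?pS ?pE s m = ?pS s * p_M S E enc ?pS ?pE m"
    using joint[OF s] by simp
qed

lemma uniform_offline_success:
  assumes "finite E"
  shows "offline_success S E enc (\<lambda>e. 1 / real (card E)) i q =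
         real (card {e\<in>E. offline_out q (valid_msgs S enc e) i \<in> valid_msgs S enc e}) / real (card E)"
  unfolding offline_success_def using assms by (simp add: sum.If_cases Int_def)

lemma V_secure_if_constant_success:
  assumes "offline_strategy S M E enc i q0"
    and "\<And>q. offline_strategy S M E enc i q \<Longrightarrow> offline_success S E enc pE i q = real (card S) / real (card M)"
  shows "V_secure S M E enc pE i"
proof -
  have "offline_success S E enc pE i ` {q. offline_strategy S M E enc i q} = {real (card S) / real (card M)}"
  proof
    show "{real (card S) / real (card M)} \<subseteq> offline_success S E enc pE i ` {q. offline_strategy S M E enc i q}"
      using assms by (auto intro: image_eqI[where x=q0])
  qed (use assms in auto)
  then show ?thesis unfolding V_secure_def P_offline_def by simp
qed

lemma optimal_iff_lambda_one:
  fixes b lam N D :: nat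
  assumes "b * D = lam * N" "0 < D" "0 < N"
  shows "real b = real N / real D \<longleftrightarrow> lam = 1"
proof -
  have "real b * real D = real lam * real N" using assms(1) by (metis of_nat_mult)
  then show ?thesis using assms(2,3) by (auto simp: field_simps)
qed

lemma (in indexed_design) balanced_ordering_auth_system:
  assumes b_pos: "0 < b"
    and order: "\<forall>j<b. bij_betw (\<sigma> j) {0..<k} (F j)"
    and balanced: "\<forall>x<v. \<forall>s<k. card {j\<in>{0..<b}. \<sigma> j s = x} = c"
  shows "auth_system {0..<k} {0..<v} {0..<b} \<sigma> \<and>
         perfect_secrecy {0..<k} {0..<v} {0..<b} \<sigma>
           (\<lambda>s. 1 / real (card {0..<k})) (\<lambda>e. 1 / real (card {0..<b})) \<and>
         V_secure {0..<k} {0..<v} {0..<b} \<sigma> (\<lambda>e. 1 / real (card {0..<b})) (t - 1)"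
proof (intro conjI)
  have valid: "valid_msgs {0..<k} \<sigma> j = F j" if "j < b" for j
    using order that by (simp add: valid_msgs_def bij_betw_def)
  show "auth_system {0..<k} {0..<v} {0..<b} \<sigma>"
    using order block_points valid unfolding auth_system_def valid_msgs_def by (auto simp: bij_betw_def)
  show "perfect_secrecy {0..<k} {0..<v} {0..<b} \<sigma>
      (\<lambda>s. 1 / real (card {0..<k})) (\<lambda>e. 1 / real (card {0..<b}))"
    using balanced by (intro uniform_perfect_secrecy) auto
  have success: "offline_success {0..<k} {0..<b} \<sigma> (\<lambda>e. 1 / real (card {0..<b})) (t - 1) q =
      real (card {0..<k}) / real (card {0..<v})"
    if q: "offline_strategy {0..<k} {0..<v} {0..<b} \<sigma> (t - 1) q" for q
  proof -
    define hits where "hits = card (success_keys q (t - 1) {0..<b})"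
    have count: "real v * real hits = real k * real b"
      using q valid unfolding hits_def offline_strategy_def
      by (metis (no_types, lifting) atLeastLessThan_iff le0 of_nat_mult offline_success_count)
    have "{e\<in>{0..<b}. offline_out q (valid_msgs {0..<k} \<sigma> e) (t - 1) \<in> valid_msgs {0..<k} \<sigma> e}
        = {j\<in>{0..<b}. offline_out q (F j) (t - 1) \<in> F j}"
      using valid by auto
    then have "offline_success {0..<k} {0..<b} \<sigma> (\<lambda>e. 1 / real (card {0..<b})) (t - 1) q =
        real hits / real b"
      unfolding hits_def success_keys_def by (subst uniform_offline_success) simp_all
    also have "real hits / real b = real k / real v"
      using count b_pos t_pos t_le_k k_le_v by (simp add: frac_eq_eq mult.commute)
    finally show ?thesis by simp
  qed
  have "t - 1 < v" using t_pos t_le_k k_le_v by simp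
  then show "V_secure {0..<k} {0..<v} {0..<b} \<sigma> (\<lambda>e. 1 / real (card {0..<b})) (t - 1)"
    by (rule V_secure_if_constant_success[OF counting_strategy_admissible success])
qed

theorem mainTheorem5:
  fixes t v k lam :: nat and X :: "'a set" and B :: "'a set set"
  assumes "1 \<le> t" "t \<le> k" "k \<le> v" "1 \<le> lam"
    and "is_design t v k lam X B"
    and "v dvd card B"
  shows "\<exists>(S::nat set) (M::nat set) (E::nat set) (enc :: nat \<Rightarrow> nat \<Rightarrow> nat).
           auth_system S M E enc \<and> card S = k \<and> card M = v \<and> card E = card B \<and>
           perfect_secrecy S M E enc (\<lambda>s. 1 / real (card S)) (\<lambda>e. 1 / real (card E)) \<and>
           V_secure S M E enc (\<lambda>e. 1 / real (card E)) (t - 1) \<and>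
           (real (card E) = real (v choose t) / real (k choose t) \<longleftrightarrow> lam = 1)"
proof -
  obtain F where "indexed_design t v k lam (card B) F"
    using indexed_design_exists[OF assms(1-3,5)] by blast
  then interpret D: indexed_design t v k lam "card B" F .
  obtain c where size: "card B = v * c" using assms(6) by blast
  have binom_pos: "0 < k choose t" "0 < v choose t" using assms(2,3) by simp_all
  then have b_pos: "0 < card B" using D.block_count assms(4) by (metis mult_eq_0_iff not_gr0 not_one_le_zero)
  have degree: "\<forall>x\<in>{0..<v}. card {j\<in>{0..<card B}. x \<in> F j} = k * c"
    using D.replication_number size by (auto simp: mult.commute mult.left_commute)
  obtain \<sigma> where \<sigma>: "\<forall>j\<in>{0..<card B}. bij_betw (\<sigma> j) {0..<k} (F j)"
      "\<forall>x\<in>{0..<v}. \<forall>s<k. card {j\<in>{0..<card B}. \<sigma> j s = x} = c"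
    using balanced_ordering[of "{0..<card B}" "{0..<v}" F k c] D.block_points D.block_size degree size
    by auto
  have "real (card {0..<card B}) = real (v choose t) / real (k choose t) \<longleftrightarrow> lam = 1"
    using optimal_iff_lambda_one[OF D.block_count binom_pos] by simp
  then show ?thesis
    using D.balanced_ordering_auth_system[OF b_pos, of \<sigma> c] \<sigma>
    by (intro exI[of _ "{0..<k}"] exI[of _ "{0..<v}"] exI[of _ "{0..<card B}"] exI[of _ \<sigma>]) auto
qed

end
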